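(* Let $n,k\ge1$ and $\theta>0$. Let $r_1,\dots,r_k$ be nonnegative integers with $r:=\sum_{i=1}^k r_i\le n$ and $\kappa:=\sum_{i=1}^k ir_i\le k$. Then $$\mathbf E\left[\prod_{i=1}^k\{A_{n,k}(i)\}_{r_i}\right]=\{n\}_r\{k\}_\kappa\,\frac{\sigma_{k-\kappa}((n-r)\theta)}{\sigma_k(n\theta)}\prod_{i=1}^k\left(\frac{\sigma_i(\theta)}{i!}\right)^{r_i}.$$
   Context: Let $(\phi_m)_{m\ge1}$ be nonnegative reals with $\phi_1>0$ such that $\phi(x)=\sum_{m\ge1}\phi_m x^m/m!$ has positive radius of convergence. For $\theta>0$ define the polynomials $\sigma_k(\theta)$ by $e^{\theta\phi(x)}=1+\sum_{k\ge1}\sigma_k(\theta)x^k/k!$, with $\sigma_0\equiv1$. For integers $n,k\ge1$, let $\mathbf K_{n,k}=(K_{n,k}(1),\dots,K_{n,k}(n))$ be a random vector in $\mathbb N_0^n$ with $$\mathbf P(\mathbf K_{n,k}=(k_1,\dots,k_n))=\frac{k!}{\sigma_k(n\theta)}\prod_{m=1}^n\frac{\sigma_{k_m}(\theta)}{k_m!}\quad\text{for } k_1+\dots+k_n=k.$$ For $i=0,\dots,k$ let $A_{n,k}(i):=\#\{m:K_{n,k}(m)=i\}$. The falling factorial is $\{a\}_l=a(a-1)\cdots(a-l+1)$, with $\{a\}_0=1$. *)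

theory Defs
  imports "HOL-Analysis.Analysis" "HOL-Computational_Algebra.Formal_Power_Series"
begin

definition ffact :: "real \<Rightarrow> nat \<Rightarrow> real" where
  "ffact a l = (\<Prod>j<l. a - real j)"

definition phi_fps :: "(nat \<Rightarrow> real) \<Rightarrow> real fps" where
  "phi_fps ph = Abs_fps (\<lambda>m. if m = 0 then 0 else ph m / fact m)"

definition sigma :: "(nat \<Rightarrow> real) \<Rightarrow> nat \<Rightarrow> real \<Rightarrow> real" where
  "sigma ph k \<theta> = fact k * fps_nth (fps_exp 1 oo (fps_const \<theta> * phi_fps ph)) k"

text \<open>Support of K_{n,k}: vectors (k_1,...,k_n), encoded as functions vanishing outside {1..n}.\<close>
definition compositions :: "nat \<Rightarrow> nat \<Rightarrow> (nat \<Rightarrow> nat) set" where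
  "compositions n k = {v. (\<forall>m. m \<notin> {1..n} \<longrightarrow> v m = 0) \<and> (\<Sum>m=1..n. v m) = k}"

definition prob_K :: "(nat \<Rightarrow> real) \<Rightarrow> real \<Rightarrow> nat \<Rightarrow> nat \<Rightarrow> (nat \<Rightarrow> nat) \<Rightarrow> real" where
  "prob_K ph \<theta> n k v = fact k / sigma ph k (real n * \<theta>) * (\<Prod>m=1..n. sigma ph (v m) \<theta> / fact (v m))"

definition A_count :: "nat \<Rightarrow> (nat \<Rightarrow> nat) \<Rightarrow> nat \<Rightarrow> nat" where
  "A_count n v i = card {m \<in> {1..n}. v m = i}"

definition expect_K :: "(nat \<Rightarrow> real) \<Rightarrow> real \<Rightarrow> nat \<Rightarrow> nat \<Rightarrow> ((nat \<Rightarrow> nat) \<Rightarrow> real) \<Rightarrow> real" where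
  "expect_K ph \<theta> n k X = (\<Sum>v\<in>compositions n k. prob_K ph \<theta> n k v * X v)"

end

theory Submission
  imports Defs
begin

text \<open>
  With weights \<open>w j = \<sigma>_j(\<theta>)/j!\<close> the expectation is \<open>k!/\<sigma>_k(n\<theta>)\<close> times a sum, over
  compositions \<open>v\<close> of \<open>k\<close> into \<open>n\<close> parts, of \<open>\<Prod>_m w(v_m) \<Prod>_i {A(i)}_(r_i)\<close>. For arbitrary
  weights with generating function \<open>W\<close> this sum is \<open>{n}_R \<Prod>_i w_i^(r_i) [x^(K-\<kappa>)] W^(n-R)\<close>.
  This follows by induction on \<open>n\<close>: the last part of a composition either leaves every count
  \<open>A(i)\<close> unchanged or raises exactly one of them by one, and \<open>{a+1}_l = {a}_l + l {a}_(l-1)\<close>.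
  Finally \<open>W = exp(\<theta>\<phi>)\<close>, so \<open>W^(n-R) = exp((n-R)\<theta>\<phi>)\<close> has coefficients \<open>\<sigma>_j((n-R)\<theta>)/j!\<close>.
\<close>

lemma ffact_0 [simp]: "ffact a 0 = 1"
  by (simp add: ffact_def)

lemma ffact_Suc: "ffact a (Suc l) = ffact a l * (a - real l)"
  by (simp add: ffact_def)

lemma ffact_Suc_left: "ffact a (Suc l) = a * ffact (a - 1) l"
  unfolding ffact_def prod.lessThan_Suc_shift by (simp add: algebra_simps)

lemma ffact_add_one: "ffact (a + 1) l = ffact a l + real l * ffact a (l - 1)"
proof (cases l)
  case (Suc m)
  have "ffact (a + 1) (Suc m) = (a + 1) * ffact a m"
    by (simp add: ffact_Suc_left)
  also have "\<dots> = ffact a (Suc m) + real (Suc m) * ffact a m"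
    by (simp add: ffact_Suc algebra_simps)
  finally show ?thesis
    using Suc by simp
qed simp

lemma ffact_of_nat_eq_0: "n < l \<Longrightarrow> ffact (real n) l = 0"
  unfolding ffact_def by (rule prod_zero) auto

lemma ffact_of_nat_eq_fact_div: "m \<le> k \<Longrightarrow> ffact (real k) m = fact k / fact (k - m)"
proof (induction m)
  case (Suc m)
  have km: "k - m = Suc (k - Suc m)"
    using Suc.prems by simp
  have "ffact (real k) (Suc m) = fact k / fact (k - m) * real (k - m)"
    using Suc by (simp add: ffact_Suc of_nat_diff)
  also have "\<dots> = fact k / fact (k - Suc m)"
    unfolding km fact_Suc by (simp del: of_nat_Suc)
  finally show ?case .
qed simp

lemma compositions_0: "compositions 0 K = (if K = 0 then {\<lambda>_. 0} else {})"
  unfolding compositions_def by auto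

lemma compositions_vanish_Suc: "v \<in> compositions n K \<Longrightarrow> v (Suc n) = 0"
  unfolding compositions_def by auto

lemma compositions_Suc:
  "compositions (Suc n) K = (\<lambda>(j, v). v(Suc n := j)) ` (SIGMA j:{..K}. compositions n (K - j))"
proof (intro equalityI subsetI)
  fix u
  assume u: "u \<in> compositions (Suc n) K"
  let ?v = "u(Suc n := 0)"
  have "(\<Sum>m=1..n. ?v m) = (\<Sum>m=1..n. u m)"
    by (rule sum.cong) auto
  then have "?v \<in> compositions n (K - u (Suc n))" "u (Suc n) \<le> K"
    using u unfolding compositions_def by auto
  then show "u \<in> (\<lambda>(j, v). v(Suc n := j)) ` (SIGMA j:{..K}. compositions n (K - j))"
    by (intro image_eqI[where x = "(u (Suc n), ?v)"]) auto
next
  fix u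
  assume "u \<in> (\<lambda>(j, v). v(Suc n := j)) ` (SIGMA j:{..K}. compositions n (K - j))"
  then obtain j v where u: "u = v(Suc n := j)" and "j \<le> K" "v \<in> compositions n (K - j)"
    by auto
  moreover have "(\<Sum>m=1..n. u m) = (\<Sum>m=1..n. v m)"
    unfolding u by (rule sum.cong) auto
  ultimately show "u \<in> compositions (Suc n) K"
    unfolding compositions_def by auto
qed

lemma finite_compositions: "finite (compositions n K)"
proof (induction n arbitrary: K)
  case (Suc n)
  then show ?case
    by (simp add: compositions_Suc)
qed (simp add: compositions_0)

lemma sum_compositions_Suc:
  "(\<Sum>u\<in>compositions (Suc n) K. f u) = (\<Sum>j\<le>K. \<Sum>v\<in>compositions n (K - j). f (v(Suc n := j)))"
proof -
  have "inj_on (\<lambda>(j, v). v(Suc n := j)) (SIGMA j:{..K}. compositions n (K - j))"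
  proof (rule inj_onI, clarify)
    fix j v j' v'
    assume v: "v \<in> compositions n (K - j)" "v' \<in> compositions n (K - j')"
      and eq: "v(Suc n := j) = v'(Suc n := j')"
    have "v m = v' m" for m
      using fun_cong[OF eq, of m] compositions_vanish_Suc[OF v(1)] compositions_vanish_Suc[OF v(2)]
      by (cases "m = Suc n") auto
    then show "j = j' \<and> v = v'"
      using fun_cong[OF eq, of "Suc n"] by auto
  qed
  then show ?thesis
    unfolding compositions_Suc by (simp add: sum.reindex sum.Sigma finite_compositions split_def)
qed

lemma A_count_Suc_fun_upd:
  assumes "v (Suc n) = 0"
  shows "A_count (Suc n) (v(Suc n := j)) i = A_count n v i + (if j = i then 1 else 0)"
proof -
  have "{m \<in> {1..Suc n}. (v(Suc n := j)) m = i}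
      = {m \<in> {1..n}. v m = i} \<union> (if j = i then {Suc n} else {})"
    using assms by auto
  then show ?thesis
    unfolding A_count_def by (simp add: card_insert_if)
qed

lemma prod_ffact_add_indicator:
  assumes "finite I"
  shows "(\<Prod>i\<in>I. ffact (a i + (if j = i then 1 else 0)) (r i))
    = (\<Prod>i\<in>I. ffact (a i) (r i))
      + (if j \<in> I then real (r j) * (\<Prod>i\<in>I. ffact (a i) ((r(j := r j - 1)) i)) else 0)"
proof (cases "j \<in> I")
  case True
  have "(\<Prod>i\<in>I-{j}. ffact (a i + (if j = i then 1 else 0)) (r i)) = (\<Prod>i\<in>I-{j}. ffact (a i) (r i))"
    by (rule prod.cong) auto
  moreover have "(\<Prod>i\<in>I-{j}. ffact (a i) ((r(j := r j - 1)) i)) = (\<Prod>i\<in>I-{j}. ffact (a i) (r i))"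
    by (rule prod.cong) auto
  ultimately show ?thesis
    using True ffact_add_one[of "a j" "r j"] by (simp add: prod.remove[OF assms True] algebra_simps)
qed (auto intro: prod.cong)

subsection \<open>Weighted factorial moments of the counts\<close>

definition weighted_moment :: "(nat \<Rightarrow> real) \<Rightarrow> nat set \<Rightarrow> nat \<Rightarrow> nat \<Rightarrow> (nat \<Rightarrow> nat) \<Rightarrow> real"
  where "weighted_moment w I n K r = (\<Sum>v\<in>compositions n K.
    (\<Prod>m=1..n. w (v m)) * (\<Prod>i\<in>I. ffact (real (A_count n v i)) (r i)))"

text \<open>The coefficient \<open>[x\<^sup>K\<^sup>-\<^sup>\<kappa>] W\<^sup>n\<^sup>-\<^sup>R\<close>, set to \<open>0\<close> when \<open>\<kappa> > K\<close> (natural subtraction would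
  otherwise read off the constant coefficient).\<close>
definition residual_coeff :: "(nat \<Rightarrow> real) \<Rightarrow> nat set \<Rightarrow> nat \<Rightarrow> nat \<Rightarrow> (nat \<Rightarrow> nat) \<Rightarrow> real"
  where "residual_coeff w I n K r = (if (\<Sum>i\<in>I. i * r i) \<le> K
    then fps_nth (Abs_fps w ^ (n - sum r I)) (K - (\<Sum>i\<in>I. i * r i)) else 0)"

lemma weighted_moment_Suc:
  assumes "finite I"
  shows "weighted_moment w I (Suc n) K r = (\<Sum>j\<le>K. w j * weighted_moment w I n (K - j) r)
     + (\<Sum>j\<le>K. if j \<in> I
          then w j * real (r j) * weighted_moment w I n (K - j) (r(j := r j - 1)) else 0)"
proof -
  have weight_upd: "(\<Prod>m=1..Suc n. w ((v(Suc n := j)) m)) = (\<Prod>m=1..n. w (v m)) * w j" for v j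
  proof -
    have "(\<Prod>m=1..n. w ((v(Suc n := j)) m)) = (\<Prod>m=1..n. w (v m))"
      by (rule prod.cong) auto
    moreover have "{1..Suc n} = insert (Suc n) {1..n}"
      by auto
    ultimately show ?thesis
      by simp
  qed
  have "weighted_moment w I (Suc n) K r = (\<Sum>j\<le>K. \<Sum>v\<in>compositions n (K - j). (\<Prod>m=1..n. w (v m)) * w j
      * (\<Prod>i\<in>I. ffact (real (A_count n v i) + (if j = i then 1 else 0)) (r i)))"
    unfolding weighted_moment_def sum_compositions_Suc
    by (intro sum.cong refl)
      (simp add: weight_upd A_count_Suc_fun_upd compositions_vanish_Suc if_distrib add.commute cong: if_cong)
  also have "\<dots> = (\<Sum>j\<le>K. w j * weighted_moment w I n (K - j) r + (if j \<in> I
      then w j * real (r j) * weighted_moment w I n (K - j) (r(j := r j - 1)) else 0))"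
    unfolding weighted_moment_def prod_ffact_add_indicator[OF assms]
    by (intro sum.cong refl) (simp add: sum.distrib sum_distrib_left algebra_simps)
  finally show ?thesis
    by (simp add: sum.distrib)
qed

lemma residual_coeff_Suc:
  assumes "sum r I \<le> n"
  shows "(\<Sum>j\<le>K. w j * residual_coeff w I n (K - j) r) = residual_coeff w I (Suc n) K r"
proof (cases "(\<Sum>i\<in>I. i * r i) \<le> K")
  case True
  define \<kappa> where "\<kappa> = (\<Sum>i\<in>I. i * r i)"
  define G where "G = Abs_fps w ^ (n - sum r I)"
  have "residual_coeff w I (Suc n) K r = fps_nth (Abs_fps w * G) (K - \<kappa>)"
    unfolding residual_coeff_def G_def \<kappa>_def using True assms by (simp add: Suc_diff_le)
  also have "\<dots> = (\<Sum>j=0..K-\<kappa>. w j * fps_nth G (K - \<kappa> - j))"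
    by (simp add: fps_mult_nth)
  also have "\<dots> = (\<Sum>j\<le>K. w j * residual_coeff w I n (K - j) r)"
    unfolding residual_coeff_def G_def \<kappa>_def[symmetric] using True
    by (intro sum.mono_neutral_cong_right[symmetric]) (auto simp: diff_diff_left add.commute \<kappa>_def)
  finally show ?thesis ..
qed (auto simp: residual_coeff_def intro!: sum.neutral)

lemma sum_fun_upd_pred:
  fixes c :: "nat \<Rightarrow> nat"
  assumes "finite I" "j \<in> I" "r j > 0"
  shows "(\<Sum>i\<in>I. c i * (r(j := r j - 1)) i) + c j = (\<Sum>i\<in>I. c i * r i)"
proof -
  have "(\<Sum>i\<in>I-{j}. c i * (r(j := r j - 1)) i) = (\<Sum>i\<in>I-{j}. c i * r i)"
    by (rule sum.cong) auto
  moreover have "c j * (r j - 1) + c j = c j * r j"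
    using assms(3) by (cases "r j") auto
  ultimately show ?thesis
    by (simp add: sum.remove[OF assms(1,2)])
qed

lemma prod_power_fun_upd_pred:
  assumes "finite I" "j \<in> I" "r j > 0"
  shows "w j * (\<Prod>i\<in>I. w i ^ (r(j := r j - 1)) i) = (\<Prod>i\<in>I. w i ^ r i)"
proof -
  have "(\<Prod>i\<in>I-{j}. w i ^ (r(j := r j - 1)) i) = (\<Prod>i\<in>I-{j}. w i ^ r i)"
    by (rule prod.cong) auto
  moreover have "w j * w j ^ (r j - 1) = w j ^ r j"
    using assms(3) by (simp add: power_eq_if)
  ultimately show ?thesis
    by (simp add: prod.remove[OF assms(1,2)] mult.assoc[symmetric])
qed

lemma residual_coeff_fun_upd_pred:
  assumes "finite I" "j \<in> I" "r j > 0" "j \<le> K"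
  shows "residual_coeff w I n (K - j) (r(j := r j - 1)) = residual_coeff w I (Suc n) K r"
proof -
  define r' where "r' = r(j := r j - 1)"
  have R: "sum r I = Suc (sum r' I)"
    using sum_fun_upd_pred[of I j r "\<lambda>_. 1"] assms unfolding r'_def by simp
  have \<kappa>: "(\<Sum>i\<in>I. i * r i) = (\<Sum>i\<in>I. i * r' i) + j"
    using sum_fun_upd_pred[of I j r "\<lambda>i. i"] assms unfolding r'_def by simp
  show ?thesis
    unfolding residual_coeff_def r'_def[symmetric] R \<kappa> using assms(4) by (auto simp: add.commute)
qed

lemma sum_restrict_atMost_of_weighted_sum_le:
  assumes "finite I" "(\<Sum>i\<in>I. i * r i) \<le> K"
  shows "(\<Sum>j\<le>K. if j \<in> I then real (r j) else 0) = real (sum r I)"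
proof -
  have "\<forall>i\<in>I - {..K} \<inter> I. real (r i) = 0"
  proof
    fix i
    assume i: "i \<in> I - {..K} \<inter> I"
    have "i * r i \<le> (\<Sum>i\<in>I. i * r i)"
      using i assms(1) by (intro member_le_sum) auto
    then have "i * r i \<le> K"
      using assms(2) by linarith
    with i show "real (r i) = 0"
      by (cases "r i") auto
  qed
  then have "(\<Sum>j\<in>{..K} \<inter> I. real (r j)) = (\<Sum>j\<in>I. real (r j))"
    using assms(1) by (intro sum.mono_neutral_left) auto
  then show ?thesis
    by (simp add: sum.inter_restrict)
qed

lemma sum_closed_form_fun_upd_pred:
  assumes "finite I"
  shows "(\<Sum>j\<le>K. if j \<in> I then w j * real (r j) * (ffact x (sum (r(j := r j - 1)) I)
      * (\<Prod>i\<in>I. w i ^ (r(j := r j - 1)) i) * residual_coeff w I n (K - j) (r(j := r j - 1))) else 0)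
    = real (sum r I) * (ffact x (sum r I - 1) * (\<Prod>i\<in>I. w i ^ r i) * residual_coeff w I (Suc n) K r)"
    (is "?lhs = real (sum r I) * ?X")
proof -
  have "?lhs = (\<Sum>j\<le>K. if j \<in> I then real (r j) else 0) * ?X"
    unfolding sum_distrib_right
  proof (intro sum.cong refl)
    fix j
    have "sum (r(j := r j - 1)) I = sum r I - 1" if "j \<in> I" "r j > 0"
      using sum_fun_upd_pred[of I j r "\<lambda>_. 1"] assms that by simp
    moreover assume "j \<in> {..K}"
    ultimately show "(if j \<in> I then w j * real (r j) * (ffact x (sum (r(j := r j - 1)) I)
        * (\<Prod>i\<in>I. w i ^ (r(j := r j - 1)) i) * residual_coeff w I n (K - j) (r(j := r j - 1))) else 0)
      = (if j \<in> I then real (r j) else 0) * ?X"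
      using prod_power_fun_upd_pred[OF assms, of j r w] residual_coeff_fun_upd_pred[OF assms, of j r K w n]
      by (cases "j \<in> I \<and> r j > 0") (auto simp: algebra_simps)
  qed
  also have "\<dots> = real (sum r I) * ?X"
    using sum_restrict_atMost_of_weighted_sum_le[OF assms]
    by (cases "(\<Sum>i\<in>I. i * r i) \<le> K") (auto simp: residual_coeff_def)
  finally show ?thesis .
qed

lemma weighted_moment_0:
  assumes "finite I"
  shows "weighted_moment w I 0 K r = ffact 0 (sum r I) * (\<Prod>i\<in>I. w i ^ r i) * residual_coeff w I 0 K r"
proof (cases "sum r I = 0")
  case True
  then have "\<forall>i\<in>I. r i = 0"
    using assms by simp
  then show ?thesis
    using True by (simp add: weighted_moment_def residual_coeff_def compositions_0 A_count_def)
next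
  case False
  then obtain i where "i \<in> I" "r i > 0"
    using assms by (metis sum.neutral neq0_conv)
  then have "(\<Prod>i\<in>I. ffact 0 (r i)) = 0"
    using assms ffact_of_nat_eq_0[of 0 "r i"] by (intro prod_zero) auto
  moreover have "ffact 0 (sum r I) = 0"
    using False ffact_of_nat_eq_0[of 0] by simp
  ultimately show ?thesis
    by (simp add: weighted_moment_def compositions_0 A_count_def)
qed

lemma weighted_moment_eq:
  assumes "finite I"
  shows "weighted_moment w I n K r
    = ffact (real n) (sum r I) * (\<Prod>i\<in>I. w i ^ r i) * residual_coeff w I n K r"
proof (induction n arbitrary: K r)
  case 0
  show ?case
    using weighted_moment_0[OF assms] by simp
next
  case (Suc n)
  have unchanged: "(\<Sum>j\<le>K. w j * weighted_moment w I n (K - j) r)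
      = ffact (real n) (sum r I) * (\<Prod>i\<in>I. w i ^ r i) * residual_coeff w I (Suc n) K r"
  proof (cases "sum r I \<le> n")
    case True
    then show ?thesis
      unfolding Suc.IH residual_coeff_Suc[OF True, symmetric] sum_distrib_left
      by (simp add: algebra_simps)
  next
    case False
    then show ?thesis
      unfolding Suc.IH by (simp add: ffact_of_nat_eq_0)
  qed
  have "weighted_moment w I (Suc n) K r
      = (ffact (real n) (sum r I) + real (sum r I) * ffact (real n) (sum r I - 1))
        * (\<Prod>i\<in>I. w i ^ r i) * residual_coeff w I (Suc n) K r"
    unfolding weighted_moment_Suc[OF assms] unchanged
    unfolding Suc.IH sum_closed_form_fun_upd_pred[OF assms] by (simp add: algebra_simps)
  then show ?case
    using ffact_add_one[of "real n" "sum r I"] by (simp add: add.commute)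
qed

subsection \<open>The generating function of \<open>\<sigma>\<close>\<close>

lemma fps_exp_compose_scale:
  fixes p :: "real fps"
  shows "fps_exp a oo (fps_const t * p) = fps_exp 1 oo (fps_const (a * t) * p)"
proof (rule fps_ext)
  have power_const: "(fps_const c * p) ^ i = fps_const (c ^ i) * p ^ i" for c i
    by (simp add: power_mult_distrib)
  fix N
  show "fps_nth (fps_exp a oo (fps_const t * p)) N = fps_nth (fps_exp 1 oo (fps_const (a * t) * p)) N"
    unfolding fps_compose_nth power_const fps_mult_left_const_nth fps_exp_nth
    by (simp add: power_mult_distrib mult.assoc)
qed

lemma sigma_egf: "Abs_fps (\<lambda>j. sigma ph j t / fact j) = fps_exp 1 oo (fps_const t * phi_fps ph)"
  by (rule fps_ext) (simp add: sigma_def)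

lemma sigma_egf_power_nth:
  "fps_nth (Abs_fps (\<lambda>j. sigma ph j t / fact j) ^ m) K = sigma ph K (real m * t) / fact K"
proof -
  have const_0: "fps_nth (fps_const t * phi_fps ph) 0 = 0"
    by (simp add: phi_fps_def)
  have "Abs_fps (\<lambda>j. sigma ph j t / fact j) ^ m = fps_exp (of_nat m * 1) oo (fps_const t * phi_fps ph)"
    unfolding sigma_egf fps_compose_power[OF const_0] fps_exp_power_mult ..
  also have "\<dots> = fps_exp 1 oo (fps_const (real m * t) * phi_fps ph)"
    using fps_exp_compose_scale[of "of_nat m * 1" t "phi_fps ph"] by simp
  also have "\<dots> = Abs_fps (\<lambda>j. sigma ph j (real m * t) / fact j)"
    by (rule sigma_egf[symmetric])
  finally show ?thesis
    by simp
qed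

theorem proposition5:
  fixes ph :: "nat \<Rightarrow> real" and \<theta> :: real and n k :: nat and r :: "nat \<Rightarrow> nat"
  assumes ph_nonneg: "\<And>m. m \<ge> 1 \<Longrightarrow> ph m \<ge> 0"
    and ph1: "ph 1 > 0"
    and radius: "\<exists>R>0. summable (\<lambda>m. ph m / fact m * R ^ m)"
    and n: "n \<ge> 1" and k: "k \<ge> 1" and theta: "\<theta> > 0"
    and r_le: "(\<Sum>i=1..k. r i) \<le> n"
    and kappa_le: "(\<Sum>i=1..k. i * r i) \<le> k"
  shows "expect_K ph \<theta> n k (\<lambda>v. \<Prod>i=1..k. ffact (real (A_count n v i)) (r i))
    = ffact (real n) (\<Sum>i=1..k. r i) * ffact (real k) (\<Sum>i=1..k. i * r i)
      * sigma ph (k - (\<Sum>i=1..k. i * r i)) (real (n - (\<Sum>i=1..k. r i)) * \<theta>)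
      / sigma ph k (real n * \<theta>)
      * (\<Prod>i=1..k. (sigma ph i \<theta> / fact i) ^ r i)"
proof -
  define w where "w = (\<lambda>j. sigma ph j \<theta> / fact j)"
  define R where "R = (\<Sum>i=1..k. r i)"
  define \<kappa> where "\<kappa> = (\<Sum>i=1..k. i * r i)"
  have "expect_K ph \<theta> n k (\<lambda>v. \<Prod>i=1..k. ffact (real (A_count n v i)) (r i))
      = fact k / sigma ph k (real n * \<theta>) * weighted_moment w {1..k} n k r"
    unfolding expect_K_def prob_K_def weighted_moment_def sum_distrib_left w_def
    by (intro sum.cong refl) (simp add: algebra_simps)
  also have "weighted_moment w {1..k} n k r
      = ffact (real n) R * (\<Prod>i=1..k. w i ^ r i) * residual_coeff w {1..k} n k r"
    unfolding R_def by (rule weighted_moment_eq) simp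
  also have "residual_coeff w {1..k} n k r = sigma ph (k - \<kappa>) (real (n - R) * \<theta>) / fact (k - \<kappa>)"
    using kappa_le unfolding residual_coeff_def \<kappa>_def[symmetric] R_def[symmetric]
    by (simp add: w_def sigma_egf_power_nth)
  also have "(\<Prod>i=1..k. w i ^ r i) = (\<Prod>i=1..k. (sigma ph i \<theta> / fact i) ^ r i)"
    unfolding w_def ..
  finally have moment: "expect_K ph \<theta> n k (\<lambda>v. \<Prod>i=1..k. ffact (real (A_count n v i)) (r i))
      = fact k / sigma ph k (real n * \<theta>) * (ffact (real n) R * (\<Prod>i=1..k. (sigma ph i \<theta> / fact i) ^ r i)
        * (sigma ph (k - \<kappa>) (real (n - R) * \<theta>) / fact (k - \<kappa>)))" .
  have ffact_k: "ffact (real k) \<kappa> = fact k / fact (k - \<kappa>)"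
    using kappa_le unfolding \<kappa>_def by (rule ffact_of_nat_eq_fact_div)
  show ?thesis
    unfolding moment R_def[symmetric] \<kappa>_def[symmetric] ffact_k by (simp add: algebra_simps)
qed

end
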